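(* In the standing setup, let $g=B^{\rm T}f$ with $f=f_0$ be associated to $f$ via $B=\alpha I+\beta A+\gamma A^2$, $B^2=I$. Then for every vector $v\in\mathbb C^6$, $$g''v=f''(B^{\rm T}v),\qquad f''v=g''(B^{\rm T}v),$$ equivalently $B^{\rm T}(f''v)=f''(B^{\rm T}v)$ and $B^{\rm T}(g''v)=g''(B^{\rm T}v)$.
   Context: Standing setup: $J=\begin{pmatrix}0&I_3\\-I_3&0\end{pmatrix}$ ($6\times6$). $A$ is a fixed real $6\times 6$ skew-Hamiltonian matrix ($A^{\rm T}J=JA$). $H_0$ is a homogeneous cubic polynomial on $\mathbb R^6$ with $A\nabla^2H_0(x)=\nabla^2H_0(x)A^{\rm T}$ for all $x$, $H_1,H_2$ homogeneous cubic polynomials with $\nabla H_1=A\nabla H_0$, $\nabla H_2=A\nabla H_1$, $f_i=J\nabla H_i$. For a quadratic vector field $h$, the second derivative $h''$ is a constant tensor, and for a vector $v$, $h''v$ denotes the $6\times6$ matrix with entries $(h''v)_{ij}=\sum_\ell \frac{\partial^2h_i}{\partial x_j\partial x_\ell}v_\ell$. Associated field: if $B=\alpha I+\beta A+\gamma A^2$ with $B^2=I$, then $g=B^{\rm T}f_0$. *)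

theory Defs
  imports "HOL-Analysis.Analysis"
begin

text \<open>Conventions: points of R^6 are functions nat => real, only coordinates 0..5
  matter; 6x6 matrices are functions nat => nat => real with indices below 6.
  Partial derivatives are genuine real derivatives along coordinate directions.\<close>

definition pd :: "nat \<Rightarrow> ((nat \<Rightarrow> real) \<Rightarrow> real) \<Rightarrow> (nat \<Rightarrow> real) \<Rightarrow> real" where
  "pd i F x = deriv (\<lambda>t. F (x(i := x i + t))) 0"

definition grad :: "((nat \<Rightarrow> real) \<Rightarrow> real) \<Rightarrow> (nat \<Rightarrow> real) \<Rightarrow> nat \<Rightarrow> real" where
  "grad F x i = pd i F x"

definition hess :: "((nat \<Rightarrow> real) \<Rightarrow> real) \<Rightarrow> (nat \<Rightarrow> real) \<Rightarrow> nat \<Rightarrow> nat \<Rightarrow> real" where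
  "hess F x i j = pd j (\<lambda>y. pd i F y) x"

definition hom_cubic :: "((nat \<Rightarrow> real) \<Rightarrow> real) \<Rightarrow> bool" where
  "hom_cubic H \<longleftrightarrow> (\<exists>c :: nat \<Rightarrow> nat \<Rightarrow> nat \<Rightarrow> real. \<forall>x.
     H x = (\<Sum>i<6. \<Sum>j<6. \<Sum>k<6. c i j k * x i * x j * x k))"

definition idm :: "nat \<Rightarrow> nat \<Rightarrow> real" where
  "idm i j = (if i = j then 1 else 0)"

definition mmul :: "(nat \<Rightarrow> nat \<Rightarrow> 'a::comm_semiring_1) \<Rightarrow> (nat \<Rightarrow> nat \<Rightarrow> 'a) \<Rightarrow> nat \<Rightarrow> nat \<Rightarrow> 'a" where
  "mmul X Y i j = (\<Sum>k<6. X i k * Y k j)"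

definition mvec :: "(nat \<Rightarrow> nat \<Rightarrow> 'a::comm_semiring_1) \<Rightarrow> (nat \<Rightarrow> 'a) \<Rightarrow> nat \<Rightarrow> 'a" where
  "mvec X v i = (\<Sum>k<6. X i k * v k)"

definition tr :: "(nat \<Rightarrow> nat \<Rightarrow> 'a) \<Rightarrow> nat \<Rightarrow> nat \<Rightarrow> 'a" where
  "tr X i j = X j i"

definition cmat :: "(nat \<Rightarrow> nat \<Rightarrow> real) \<Rightarrow> nat \<Rightarrow> nat \<Rightarrow> complex" where
  "cmat X i j = complex_of_real (X i j)"

text \<open>J = [[0, I3], [-I3, 0]]\<close>
definition Jm :: "nat \<Rightarrow> nat \<Rightarrow> real" where
  "Jm i j = (if i < 3 \<and> j = i + 3 then 1 else if 3 \<le> i \<and> i < 6 \<and> j + 3 = i then -1 else 0)"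

definition mat_eq6 :: "(nat \<Rightarrow> nat \<Rightarrow> 'a) \<Rightarrow> (nat \<Rightarrow> nat \<Rightarrow> 'a) \<Rightarrow> bool" where
  "mat_eq6 X Y \<longleftrightarrow> (\<forall>i<6. \<forall>j<6. X i j = Y i j)"

definition hamvf :: "((nat \<Rightarrow> real) \<Rightarrow> real) \<Rightarrow> (nat \<Rightarrow> real) \<Rightarrow> nat \<Rightarrow> real" where
  "hamvf H x = mvec Jm (grad H x)"

text \<open>(h'' v)_{ij} = sum_l d^2 h_i / dx_j dx_l * v_l, evaluated at the point x
  (constant in x for quadratic h), for complex v.\<close>
definition d2v :: "((nat \<Rightarrow> real) \<Rightarrow> nat \<Rightarrow> real) \<Rightarrow> (nat \<Rightarrow> real) \<Rightarrow> (nat \<Rightarrow> complex) \<Rightarrow> nat \<Rightarrow> nat \<Rightarrow> complex" where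
  "d2v h x v i j = (\<Sum>l<6. complex_of_real (pd l (\<lambda>y. pd j (\<lambda>z. h z i) y) x) * v l)"

end

theory Submission
  imports Defs
begin

text \<open>The cubic H0 has a constant third derivative S, symmetric in its indices, and the
  Hamiltonian field f = J grad H0 is quadratic with f''v = J S(-, -, v), column by column.
  The hypothesis A Hess(H0) = Hess(H0) A^T, evaluated at the unit vectors, says
  A S_j = S_j A^T for every slice S_j of S; this passes to the polynomial B in A, and
  skew-Hamiltonicity A^T J = J A passes to B^T J = J B. Hence B^T commutes with every
  J S_j, which is the identity B^T (f''v) = f''(B^T v). Since g'' = B^T f'' and
  B^2 = I, the other three identities follow.\<close>

lemma update_coord: "(x(i := x i + t)) j = x j + t * (if j = i then 1 else (0::real))"
  by auto

lemma sum_if_left_zero: "(\<Sum>k\<in>A. if P then f k else 0) = (if P then sum f A else 0)"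
  by simp

lemma pd_linear_form:
  assumes "i < n"
  shows "pd i (\<lambda>x. \<Sum>k<n. E k * x k) x = E i"
proof -
  have "((\<lambda>t. \<Sum>k<n. E k * (x(i := x i + t)) k) has_field_derivative
      (\<Sum>k<n. E k * (if k = i then 1 else 0))) (at 0)"
    unfolding update_coord
    by (rule derivative_eq_intros refl | simp add: mult_ac)+
  then show ?thesis
    using assms unfolding pd_def by (simp add: DERIV_imp_deriv if_distrib cong: if_cong)
qed

lemma pd_quadratic_form:
  assumes "i < n"
  shows "pd i (\<lambda>x. \<Sum>a<n. \<Sum>b<n. Q a b * x a * x b) x = (\<Sum>k<n. (Q i k + Q k i) * x k)"
proof -
  have "((\<lambda>t. \<Sum>a<n. \<Sum>b<n. Q a b * (x(i := x i + t)) a * (x(i := x i + t)) b)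
      has_field_derivative
      (\<Sum>a<n. \<Sum>b<n. (if a = i then Q a b * x b else 0) + (if b = i then Q a b * x a else 0))) (at 0)"
    unfolding update_coord
    by (rule derivative_eq_intros refl | (intro sum.cong refl, simp add: algebra_simps))+
  moreover have "(\<Sum>a<n. \<Sum>b<n. (if a = i then Q a b * x b else 0) + (if b = i then Q a b * x a else 0))
      = (\<Sum>k<n. (Q i k + Q k i) * x k)"
    using assms by (simp add: sum.distrib sum.delta sum_if_left_zero algebra_simps)
  ultimately show ?thesis
    unfolding pd_def by (simp add: DERIV_imp_deriv)
qed

lemma pd_cubic_form:
  assumes "i < n"
  shows "pd i (\<lambda>x. \<Sum>a<n. \<Sum>b<n. \<Sum>c<n. C a b c * x a * x b * x c) x
     = (\<Sum>a<n. \<Sum>b<n. (C i a b + C a i b + C a b i) * x a * x b)"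
proof -
  have "((\<lambda>t. \<Sum>a<n. \<Sum>b<n. \<Sum>c<n.
        C a b c * (x(i := x i + t)) a * (x(i := x i + t)) b * (x(i := x i + t)) c)
      has_field_derivative
      (\<Sum>a<n. \<Sum>b<n. \<Sum>c<n. (if a = i then C a b c * x b * x c else 0)
         + (if b = i then C a b c * x a * x c else 0) + (if c = i then C a b c * x a * x b else 0))) (at 0)"
    unfolding update_coord
    by (rule derivative_eq_intros refl | (intro sum.cong refl, simp add: algebra_simps))+
  moreover have "(\<Sum>a<n. \<Sum>b<n. \<Sum>c<n. (if a = i then C a b c * x b * x c else 0)
         + (if b = i then C a b c * x a * x c else 0) + (if c = i then C a b c * x a * x b else 0))
      = (\<Sum>a<n. \<Sum>b<n. (C i a b + C a i b + C a b i) * x a * x b)"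
    using assms by (simp add: sum.distrib sum.delta sum_if_left_zero algebra_simps)
  ultimately show ?thesis
    unfolding pd_def by (simp add: DERIV_imp_deriv)
qed

lemma pd_pd_quadratic_form:
  assumes "j < n" "l < n"
  shows "pd l (\<lambda>y. pd j (\<lambda>z. \<Sum>a<n. \<Sum>b<n. Q a b * z a * z b) y) x = Q j l + Q l j"
  using pd_linear_form[OF assms(2)] by (simp add: pd_quadratic_form[OF assms(1)])

lemma quadratic_form_combination:
  "(\<Sum>k<n. w k * (\<Sum>a<n. \<Sum>b<n. Q k a b * z a * z b)) =
   (\<Sum>a<n. \<Sum>b<n. (\<Sum>k<n. w k * Q k a b) * z a * (z b :: real))"
proof -
  have "(\<Sum>k<n. w k * (\<Sum>a<n. \<Sum>b<n. Q k a b * z a * z b))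
      = (\<Sum>k<n. \<Sum>a<n. \<Sum>b<n. w k * Q k a b * z a * z b)"
    by (simp add: sum_distrib_left mult.assoc)
  also have "\<dots> = (\<Sum>a<n. \<Sum>b<n. \<Sum>k<n. w k * Q k a b * z a * z b)"
    by (subst sum.swap) (rule sum.cong[OF refl], rule sum.swap)
  finally show ?thesis by (simp add: sum_distrib_right)
qed

lemma hom_cubic_gradient:
  assumes "hom_cubic H"
  obtains S :: "nat \<Rightarrow> nat \<Rightarrow> nat \<Rightarrow> real"
  where "\<And>i j l. S i j l = S i l j"
    and "\<And>k y. k < 6 \<Longrightarrow> pd k H y = (\<Sum>a<6. \<Sum>b<6. S k a b / 2 * y a * y b)"
proof -
  obtain c where H: "H = (\<lambda>x. \<Sum>i<6. \<Sum>j<6. \<Sum>k<6. c i j k * x i * x j * x k)"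
    using assms unfolding hom_cubic_def by blast
  define D where "D k a b = c k a b + c a k b + c a b k" for k a b
  define S where "S k a b = D k a b + D k b a" for k a b
  have "pd k H y = (\<Sum>a<6. \<Sum>b<6. S k a b / 2 * y a * y b)" if "k < 6" for k y
  proof -
    have "pd k H y = (\<Sum>a<6. \<Sum>b<6. D k a b * y a * y b)"
      unfolding H pd_cubic_form[OF that] D_def ..
    moreover have "(\<Sum>a<6. \<Sum>b<6. D k b a * y a * y b) = (\<Sum>a<6. \<Sum>b<6. D k a b * y a * y b)"
      by (subst sum.swap) (simp add: mult_ac)
    moreover have "(\<Sum>a<6. \<Sum>b<6. S k a b * y a * y b)
        = (\<Sum>a<6. \<Sum>b<6. D k a b * y a * y b) + (\<Sum>a<6. \<Sum>b<6. D k b a * y a * y b)"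
      unfolding S_def by (simp add: distrib_right sum.distrib)
    ultimately show ?thesis by (simp add: sum_divide_distrib[symmetric])
  qed
  moreover have "S i j l = S i l j" for i j l
    unfolding S_def D_def by (simp add: ac_simps)
  ultimately show thesis using that by blast
qed

lemma hess_of_gradient_quadratic:
  assumes grad: "\<And>k y. k < 6 \<Longrightarrow> pd k H y = (\<Sum>a<6. \<Sum>b<6. S k a b / 2 * y a * y b)"
    and sym: "\<And>i j l. S i j l = S i l j"
    and "i < 6" "j < 6"
  shows "hess H y i j = (\<Sum>l<6. S i j l * y l)"
proof -
  have "(\<lambda>y. pd i H y) = (\<lambda>y. \<Sum>a<6. \<Sum>b<6. S i a b / 2 * y a * y b)"
    using grad[OF \<open>i < 6\<close>] by blast
  then have "hess H y i j = (\<Sum>l<6. (S i j l / 2 + S i l j / 2) * y l)"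
    unfolding hess_def using pd_quadratic_form[OF \<open>j < 6\<close>] by presburger
  then show ?thesis by (simp add: sym[of i _ j])
qed

lemma mmul_assoc: "mmul (mmul X Y) Z = mmul X (mmul Y Z)"
proof (intro ext)
  fix i j
  have "mmul (mmul X Y) Z i j = (\<Sum>k<6. \<Sum>m<6. X i m * Y m k * Z k j)"
    unfolding mmul_def by (simp add: sum_distrib_right)
  also have "\<dots> = (\<Sum>m<6. \<Sum>k<6. X i m * Y m k * Z k j)"
    by (rule sum.swap)
  also have "\<dots> = mmul X (mmul Y Z) i j"
    unfolding mmul_def by (simp add: sum_distrib_left mult.assoc)
  finally show "mmul (mmul X Y) Z i j = mmul X (mmul Y Z) i j" .
qed

lemma mvec_mvec: "mvec X (mvec Y v) = mvec (mmul X Y) v"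
proof (intro ext)
  fix i
  have "mvec X (mvec Y v) i = (\<Sum>k<6. \<Sum>m<6. X i k * Y k m * v m)"
    unfolding mvec_def by (simp add: sum_distrib_left mult.assoc)
  also have "\<dots> = (\<Sum>m<6. \<Sum>k<6. X i k * Y k m * v m)"
    by (rule sum.swap)
  also have "\<dots> = mvec (mmul X Y) v i"
    unfolding mvec_def mmul_def by (simp add: sum_distrib_right)
  finally show "mvec X (mvec Y v) i = mvec (mmul X Y) v i" .
qed

lemma mmul_mvec_columns: "mmul X (\<lambda>k j. mvec (Y j) v k) i j = mvec (mmul X (Y j)) v i"
  using fun_cong[OF mvec_mvec[of X "Y j" v], of i] by (simp add: mvec_def mmul_def)

lemma tr_tr [simp]: "tr (tr X) = X"
  by (simp add: tr_def fun_eq_iff)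

lemma tr_mmul: "tr (mmul X Y) = mmul (tr Y) (tr X)"
  by (simp add: tr_def mmul_def fun_eq_iff mult.commute)

lemma tr_idm [simp]: "tr idm = idm"
  by (simp add: tr_def idm_def fun_eq_iff)

lemma cmat_mmul: "cmat (mmul X Y) = mmul (cmat X) (cmat Y)"
  by (simp add: cmat_def mmul_def fun_eq_iff)

lemma idm_of_bool: "idm i j = of_bool (i = j)"
  by (simp add: idm_def)

lemma mmul_idm_left: "i < 6 \<Longrightarrow> mmul idm X i j = X i j"
  by (simp add: mmul_def idm_of_bool)

lemma mmul_idm_right: "j < 6 \<Longrightarrow> mmul X idm i j = X i j"
  by (simp add: mmul_def idm_of_bool)

lemma mmul_cong_left: "mat_eq6 X X' \<Longrightarrow> i < 6 \<Longrightarrow> mmul X Y i j = mmul X' Y i j"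
  unfolding mmul_def mat_eq6_def by (intro sum.cong) auto

lemma mmul_cong_right: "mat_eq6 Y Y' \<Longrightarrow> j < 6 \<Longrightarrow> mmul X Y i j = mmul X Y' i j"
  unfolding mmul_def mat_eq6_def by (intro sum.cong) auto

lemma mvec_cong: "mat_eq6 X X' \<Longrightarrow> i < 6 \<Longrightarrow> mvec X v i = mvec X' v i"
  unfolding mvec_def mat_eq6_def by (intro sum.cong) auto

lemma mvec_cmat_cong: "mat_eq6 X X' \<Longrightarrow> i < 6 \<Longrightarrow> mvec (cmat X) v i = mvec (cmat X') v i"
  by (rule mvec_cong) (auto simp: mat_eq6_def cmat_def)

lemma mat_eq6_tr: "mat_eq6 X Y \<Longrightarrow> mat_eq6 (tr X) (tr Y)"
  by (simp add: mat_eq6_def tr_def)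

type_synonym real_mat = "nat \<Rightarrow> nat \<Rightarrow> real"

definition commutes_transposed :: "real_mat \<Rightarrow> real_mat \<Rightarrow> bool" where
  "commutes_transposed M X \<longleftrightarrow> mat_eq6 (mmul M X) (mmul X (tr M))"

definition mat_commute :: "real_mat \<Rightarrow> real_mat \<Rightarrow> bool" where
  "mat_commute X Y \<longleftrightarrow> mat_eq6 (mmul X Y) (mmul Y X)"

definition mat_quadratic_poly :: "real \<Rightarrow> real \<Rightarrow> real \<Rightarrow> real_mat \<Rightarrow> real_mat" where
  "mat_quadratic_poly \<alpha> \<beta> \<gamma> M = (\<lambda>i j. \<alpha> * idm i j + \<beta> * M i j + \<gamma> * mmul M M i j)"

lemma commutes_transposed_cong:
  assumes "commutes_transposed M X" "mat_eq6 X Y"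
  shows "commutes_transposed M Y"
  using assms mmul_cong_left[OF assms(2)] mmul_cong_right[OF assms(2)]
  unfolding commutes_transposed_def mat_eq6_def by metis

lemma tr_mat_quadratic_poly:
  "tr (mat_quadratic_poly \<alpha> \<beta> \<gamma> M) = mat_quadratic_poly \<alpha> \<beta> \<gamma> (tr M)"
  by (simp add: mat_quadratic_poly_def fun_eq_iff tr_mmul[symmetric]) (simp add: tr_def idm_def)

lemma mmul_mat_quadratic_poly_left:
  "mmul (mat_quadratic_poly \<alpha> \<beta> \<gamma> M) X i j
     = \<alpha> * mmul idm X i j + \<beta> * mmul M X i j + \<gamma> * mmul (mmul M M) X i j"
  by (simp add: mat_quadratic_poly_def mmul_def sum.distrib sum_distrib_left sum_distrib_right algebra_simps)

lemma mmul_mat_quadratic_poly_right: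
  "mmul X (mat_quadratic_poly \<alpha> \<beta> \<gamma> M) i j
     = \<alpha> * mmul X idm i j + \<beta> * mmul X M i j + \<gamma> * mmul X (mmul M M) i j"
  by (simp add: mat_quadratic_poly_def mmul_def sum.distrib sum_distrib_left sum_distrib_right algebra_simps)

lemma commutes_transposed_mat_quadratic_poly:
  assumes "commutes_transposed M X"
  shows "commutes_transposed (mat_quadratic_poly \<alpha> \<beta> \<gamma> M) X"
  unfolding commutes_transposed_def mat_eq6_def
proof (intro allI impI)
  fix i j :: nat assume ij: "i < 6" "j < 6"
  have MX: "mat_eq6 (mmul M X) (mmul X (tr M))"
    using assms unfolding commutes_transposed_def .
  have "mmul (mmul M M) X i j = mmul M (mmul X (tr M)) i j"
    unfolding mmul_assoc using MX ij(2) by (rule mmul_cong_right)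
  also have "\<dots> = mmul (mmul X (tr M)) (tr M) i j"
    unfolding mmul_assoc[symmetric] using MX ij(1) by (rule mmul_cong_left)
  also have "\<dots> = mmul X (tr (mmul M M)) i j"
    by (simp add: mmul_assoc tr_mmul)
  finally have "mmul (mmul M M) X i j = mmul X (tr (mmul M M)) i j" .
  moreover have "mmul M X i j = mmul X (tr M) i j"
    using MX ij unfolding mat_eq6_def by blast
  ultimately show "mmul (mat_quadratic_poly \<alpha> \<beta> \<gamma> M) X i j
      = mmul X (tr (mat_quadratic_poly \<alpha> \<beta> \<gamma> M)) i j"
    using ij by (simp add: tr_mat_quadratic_poly mmul_mat_quadratic_poly_left
        mmul_mat_quadratic_poly_right mmul_idm_left mmul_idm_right tr_mmul)
qed

lemma transpose_commutes_with_product: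
  assumes "mat_eq6 (mmul (tr B) P) (mmul P B)" and "commutes_transposed B X"
  shows "mat_commute (tr B) (mmul P X)"
  unfolding mat_commute_def mat_eq6_def
proof (intro allI impI)
  fix i j :: nat assume ij: "i < 6" "j < 6"
  have "mmul (tr B) (mmul P X) i j = mmul (mmul P B) X i j"
    unfolding mmul_assoc[symmetric] using assms(1) ij(1) by (rule mmul_cong_left)
  also have "\<dots> = mmul P (mmul X (tr B)) i j"
    unfolding mmul_assoc using assms(2) ij(2) unfolding commutes_transposed_def
    by (rule mmul_cong_right)
  finally show "mmul (tr B) (mmul P X) i j = mmul (mmul P X) (tr B) i j"
    by (simp add: mmul_assoc)
qed

lemma mat_quadratic_poly_transpose_commute:
  assumes "mat_eq6 (mmul (tr A) P) (mmul P A)" and "commutes_transposed A X"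
  shows "mat_commute (tr (mat_quadratic_poly \<alpha> \<beta> \<gamma> A)) (mmul P X)"
proof (rule transpose_commutes_with_product)
  have "commutes_transposed (mat_quadratic_poly \<alpha> \<beta> \<gamma> (tr A)) P"
    using assms(1) by (intro commutes_transposed_mat_quadratic_poly) (simp add: commutes_transposed_def)
  then show "mat_eq6 (mmul (tr (mat_quadratic_poly \<alpha> \<beta> \<gamma> A)) P) (mmul P (mat_quadratic_poly \<alpha> \<beta> \<gamma> A))"
    by (simp add: commutes_transposed_def tr_mat_quadratic_poly)
  show "commutes_transposed (mat_quadratic_poly \<alpha> \<beta> \<gamma> A) X"
    using assms(2) by (rule commutes_transposed_mat_quadratic_poly)
qed

lemma mat_commute_mmul:
  assumes "mat_commute C M"
  shows "mat_commute C (mmul C M)"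
  unfolding mat_commute_def mat_eq6_def
proof (intro allI impI)
  fix i j :: nat assume ij: "i < 6" "j < 6"
  have "mmul C (mmul C M) i j = mmul C (mmul M C) i j"
    using assms ij(2) unfolding mat_commute_def by (rule mmul_cong_right)
  then show "mmul C (mmul C M) i j = mmul (mmul C M) C i j"
    by (simp add: mmul_assoc)
qed

definition quadratic_field ::
    "((nat \<Rightarrow> real) \<Rightarrow> nat \<Rightarrow> real) \<Rightarrow> (nat \<Rightarrow> nat \<Rightarrow> nat \<Rightarrow> real) \<Rightarrow> bool" where
  "quadratic_field h Q \<longleftrightarrow> (\<forall>z. \<forall>i<6. h z i = (\<Sum>a<6. \<Sum>b<6. Q i a b * z a * z b))"

definition second_partials :: "(nat \<Rightarrow> nat \<Rightarrow> nat \<Rightarrow> real) \<Rightarrow> nat \<Rightarrow> real_mat" where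
  "second_partials Q j = (\<lambda>i l. Q i j l + Q i l j)"

lemma quadratic_field_mvec:
  assumes "quadratic_field h Q"
  shows "quadratic_field (\<lambda>z. mvec C (h z)) (\<lambda>i a b. \<Sum>m<6. C i m * Q m a b)"
  unfolding quadratic_field_def
proof (intro allI impI)
  fix z i
  have "mvec C (h z) i = (\<Sum>m<6. C i m * (\<Sum>a<6. \<Sum>b<6. Q m a b * z a * z b))"
    using assms unfolding mvec_def quadratic_field_def by (intro sum.cong) auto
  then show "mvec C (h z) i = (\<Sum>a<6. \<Sum>b<6. (\<Sum>m<6. C i m * Q m a b) * z a * z b)"
    by (simp only: quadratic_form_combination)
qed

lemma second_partials_mvec:
  "second_partials (\<lambda>i a b. \<Sum>m<6. C i m * Q m a b) j = mmul C (second_partials Q j)"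
  by (simp add: second_partials_def mmul_def fun_eq_iff sum.distrib distrib_left)

lemma d2v_quadratic_field:
  assumes "quadratic_field h Q" "i < 6" "j < 6"
  shows "d2v h x v i j = mvec (cmat (second_partials Q j)) v i"
proof -
  have "(\<lambda>z. h z i) = (\<lambda>z. \<Sum>a<6. \<Sum>b<6. Q i a b * z a * z b)"
    using assms(1,2) unfolding quadratic_field_def by blast
  then show ?thesis
    unfolding d2v_def mvec_def cmat_def second_partials_def
    using pd_pd_quadratic_form[OF assms(3)] by (intro sum.cong) auto
qed

lemma mvec_cmat_commute:
  assumes "mat_commute C M" "i < 6"
  shows "mvec (cmat (mmul C M)) v i = mvec (cmat M) (mvec (cmat C) v) i"
  unfolding mvec_mvec cmat_mmul[symmetric]
  using assms unfolding mat_commute_def by (rule mvec_cmat_cong)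

lemma d2v_quadratic_field_commute:
  assumes "quadratic_field h Q" and "\<forall>j<6. mat_commute C (second_partials Q j)"
  shows "mat_eq6 (mmul (cmat C) (d2v h x v)) (d2v h x (mvec (cmat C) v))"
  unfolding mat_eq6_def
proof (intro allI impI)
  fix i j :: nat assume ij: "i < 6" "j < 6"
  have "mmul (cmat C) (d2v h x v) i j
      = mmul (cmat C) (\<lambda>k j. mvec (cmat (second_partials Q j)) v k) i j"
    using d2v_quadratic_field[OF assms(1)] ij(2)
    by (intro mmul_cong_right) (auto simp: mat_eq6_def)
  also have "\<dots> = mvec (cmat (mmul C (second_partials Q j))) v i"
    by (simp add: mmul_mvec_columns cmat_mmul)
  also have "\<dots> = d2v h x (mvec (cmat C) v) i j"
    using mvec_cmat_commute assms ij d2v_quadratic_field by simp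
  finally show "mmul (cmat C) (d2v h x v) i j = d2v h x (mvec (cmat C) v) i j" .
qed

lemma d2v_mvec_quadratic_field:
  assumes "quadratic_field h Q" and "\<forall>j<6. mat_commute C (second_partials Q j)"
  shows "mat_eq6 (d2v (\<lambda>z. mvec C (h z)) x v) (d2v h x (mvec (cmat C) v))"
  unfolding mat_eq6_def
proof (intro allI impI)
  fix i j :: nat assume ij: "i < 6" "j < 6"
  have "d2v (\<lambda>z. mvec C (h z)) x v i j = mvec (cmat (mmul C (second_partials Q j))) v i"
    using d2v_quadratic_field[OF quadratic_field_mvec[OF assms(1)] ij]
    by (simp add: second_partials_mvec)
  also have "\<dots> = d2v h x (mvec (cmat C) v) i j"
    using mvec_cmat_commute assms ij d2v_quadratic_field by simp
  finally show "d2v (\<lambda>z. mvec C (h z)) x v i j = d2v h x (mvec (cmat C) v) i j" .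
qed

lemma d2v_mvec_quadratic_field_involution:
  assumes "quadratic_field h Q" and "\<forall>j<6. mat_commute C (second_partials Q j)"
    and "mat_eq6 (mmul C C) idm"
  shows "mat_eq6 (d2v h x v) (d2v (\<lambda>z. mvec C (h z)) x (mvec (cmat C) v))"
  unfolding mat_eq6_def
proof (intro allI impI)
  fix i j :: nat assume ij: "i < 6" "j < 6"
  let ?P = "second_partials Q j"
  have "d2v (\<lambda>z. mvec C (h z)) x (mvec (cmat C) v) i j = d2v h x (mvec (cmat C) (mvec (cmat C) v)) i j"
    using d2v_mvec_quadratic_field[OF assms(1,2)] ij unfolding mat_eq6_def by blast
  also have "\<dots> = mvec (cmat (mmul ?P (mmul C C))) v i"
    using d2v_quadratic_field[OF assms(1) ij] by (simp add: mvec_mvec cmat_mmul mmul_assoc)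
  also have "\<dots> = mvec (cmat ?P) v i"
    using assms(3) ij(1) mmul_cong_right[OF assms(3)] mmul_idm_right
    by (intro mvec_cmat_cong) (auto simp: mat_eq6_def)
  also have "\<dots> = d2v h x v i j"
    using d2v_quadratic_field[OF assms(1) ij] by simp
  finally show "d2v h x v i j = d2v (\<lambda>z. mvec C (h z)) x (mvec (cmat C) v) i j" ..
qed

text \<open>At the unit vector e_j the Hessian is the slice S_j.\<close>
lemma commutes_transposed_third_derivative_slices:
  assumes comm: "\<forall>x. commutes_transposed A (hess H x)"
    and hess: "\<And>y i j. i < 6 \<Longrightarrow> j < 6 \<Longrightarrow> hess H y i j = (\<Sum>l<6. S i j l * y l)"
    and "j < 6"
  shows "commutes_transposed A (\<lambda>i l. S i l j)"
proof -
  have "hess H (\<lambda>n. of_bool (n = j)) i l = S i l j" if "i < 6" "l < 6" for i l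
    using that \<open>j < 6\<close> by (simp add: hess)
  then show ?thesis
    by (intro commutes_transposed_cong[OF comm[rule_format]]) (auto simp: mat_eq6_def)
qed

lemma quadratic_field_hamvf:
  assumes grad: "\<And>k y. k < 6 \<Longrightarrow> pd k H y = (\<Sum>a<6. \<Sum>b<6. S k a b / 2 * y a * y b)"
    and sym: "\<And>i j l. S i j l = S i l j"
  defines "Q \<equiv> \<lambda>i a b. \<Sum>m<6. Jm i m * (S m a b / 2)"
  shows "quadratic_field (hamvf H) Q"
    and "second_partials Q j = mmul Jm (\<lambda>i l. S i l j)"
proof -
  have "quadratic_field (grad H) (\<lambda>k a b. S k a b / 2)"
    using grad unfolding quadratic_field_def grad_def by blast
  then show "quadratic_field (hamvf H) Q"
    unfolding Q_def hamvf_def[abs_def] by (rule quadratic_field_mvec)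
  have "second_partials (\<lambda>k a b. S k a b / 2) j = (\<lambda>i l. S i l j)"
    unfolding second_partials_def using sym by (simp add: fun_eq_iff)
  then show "second_partials Q j = mmul Jm (\<lambda>i l. S i l j)"
    unfolding Q_def second_partials_mvec by simp
qed

theorem mainTheorem9:
  fixes A :: "nat \<Rightarrow> nat \<Rightarrow> real"
    and H0 H1 H2 :: "(nat \<Rightarrow> real) \<Rightarrow> real"
    and \<alpha> \<beta> \<gamma> :: real and B :: "nat \<Rightarrow> nat \<Rightarrow> real"
    and f g :: "(nat \<Rightarrow> real) \<Rightarrow> nat \<Rightarrow> real"
  assumes skewHam: "mat_eq6 (mmul (tr A) Jm) (mmul Jm A)"
    and cub0: "hom_cubic H0" and cub1: "hom_cubic H1" and cub2: "hom_cubic H2"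
    and comm: "\<forall>x. mat_eq6 (mmul A (hess H0 x)) (mmul (hess H0 x) (tr A))"
    and g1: "\<forall>x. \<forall>i<6. grad H1 x i = mvec A (grad H0 x) i"
    and g2: "\<forall>x. \<forall>i<6. grad H2 x i = mvec A (grad H1 x) i"
    and Bsq: "mat_eq6 (mmul B B) idm"
    and Bdef: "B = (\<lambda>i j. \<alpha> * idm i j + \<beta> * A i j + \<gamma> * mmul A A i j)"
    and fdef: "f = hamvf H0"
    and gdef: "g = (\<lambda>x. mvec (tr B) (f x))"
  shows "\<forall>x (v :: nat \<Rightarrow> complex).
      mat_eq6 (d2v g x v) (d2v f x (mvec (cmat (tr B)) v))
    \<and> mat_eq6 (d2v f x v) (d2v g x (mvec (cmat (tr B)) v))
    \<and> mat_eq6 (mmul (cmat (tr B)) (d2v f x v)) (d2v f x (mvec (cmat (tr B)) v))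
    \<and> mat_eq6 (mmul (cmat (tr B)) (d2v g x v)) (d2v g x (mvec (cmat (tr B)) v))"
proof (intro allI)
  fix x v
  obtain S where sym: "\<And>i j l. S i j l = S i l j"
    and grad: "\<And>k y. k < 6 \<Longrightarrow> pd k H0 y = (\<Sum>a<6. \<Sum>b<6. S k a b / 2 * y a * y b)"
    using hom_cubic_gradient[OF cub0] by blast
  define Qf where "Qf = (\<lambda>i a b. \<Sum>m<6. Jm i m * (S m a b / 2))"
  define Qg where "Qg = (\<lambda>i a b. \<Sum>m<6. tr B i m * Qf m a b)"
  have f_quadratic: "quadratic_field f Qf"
    unfolding fdef Qf_def using grad sym by (rule quadratic_field_hamvf)
  have g_quadratic: "quadratic_field g Qg"
    unfolding gdef Qg_def using f_quadratic by (rule quadratic_field_mvec)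
  have f_partials: "second_partials Qf j = mmul Jm (\<lambda>i l. S i l j)" for j
    unfolding Qf_def using grad sym by (rule quadratic_field_hamvf(2))
  have "commutes_transposed A (\<lambda>i l. S i l j)" if "j < 6" for j
    using comm hess_of_gradient_quadratic[OF grad sym] that
    unfolding commutes_transposed_def[symmetric] by (rule commutes_transposed_third_derivative_slices)
  then have f_commute: "\<forall>j<6. mat_commute (tr B) (second_partials Qf j)"
    unfolding f_partials Bdef mat_quadratic_poly_def[symmetric]
    using skewHam by (blast intro: mat_quadratic_poly_transpose_commute)
  then have g_commute: "\<forall>j<6. mat_commute (tr B) (second_partials Qg j)"
    unfolding Qg_def second_partials_mvec by (simp add: mat_commute_mmul)
  have "mat_eq6 (mmul (tr B) (tr B)) idm"
    using mat_eq6_tr[OF Bsq] by (simp add: tr_mmul)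
  then show "mat_eq6 (d2v g x v) (d2v f x (mvec (cmat (tr B)) v))
    \<and> mat_eq6 (d2v f x v) (d2v g x (mvec (cmat (tr B)) v))
    \<and> mat_eq6 (mmul (cmat (tr B)) (d2v f x v)) (d2v f x (mvec (cmat (tr B)) v))
    \<and> mat_eq6 (mmul (cmat (tr B)) (d2v g x v)) (d2v g x (mvec (cmat (tr B)) v))"
    unfolding gdef
    using d2v_mvec_quadratic_field[OF f_quadratic f_commute]
      d2v_mvec_quadratic_field_involution[OF f_quadratic f_commute]
      d2v_quadratic_field_commute[OF f_quadratic f_commute]
      d2v_quadratic_field_commute[OF g_quadratic g_commute, unfolded gdef]
    by blast
qed

end
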